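(* For all $k\ge1$, as formal power series in $t$, $$\sum_{n\ge k}\mathbf{Sf}_{n,k}(p,q)\,t^n=\frac{t^k}{(1-F_1(p,q)t)(1-F_2(p,q)t)\cdots(1-F_k(p,q)t)}.$$
   Context: $F_1(p,q)=q$, $F_2(p,q)=q^2$ and $F_m(p,q)=qF_{m-1}(p,q)+pF_{m-2}(p,q)$ for $m\ge3$. Let $(x)_{\downarrow_{F,p,q,0}}=1$ and $(x)_{\downarrow_{F,p,q,k}}=x(x-F_1(p,q))\cdots(x-F_{k-1}(p,q))$ for $k\ge1$. Define $\mathbf{Sf}_{n,k}(p,q)$ for $0\le k\le n$ by $x^n=\sum_{k=0}^n\mathbf{Sf}_{n,k}(p,q)(x)_{\downarrow_{F,p,q,k}}$. *)

theory Defs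
  imports "HOL-Computational_Algebra.Polynomial" "HOL-Computational_Algebra.Formal_Power_Series"
begin

fun Fpq :: "nat \<Rightarrow> 'a::comm_ring_1 \<Rightarrow> 'a \<Rightarrow> 'a" where
  "Fpq 0 p q = 0"
| "Fpq (Suc 0) p q = q"
| "Fpq (Suc (Suc 0)) p q = q ^ 2"
| "Fpq (Suc (Suc (Suc m))) p q = q * Fpq (Suc (Suc m)) p q + p * Fpq (Suc m) p q"

definition ffall :: "'a::comm_ring_1 \<Rightarrow> 'a \<Rightarrow> nat \<Rightarrow> 'a poly" where
  "ffall p q k = (if k = 0 then 1 else [:0, 1:] * (\<Prod>i\<in>{1..<k}. [:- Fpq i p q, 1:]))"

definition Sf :: "nat \<Rightarrow> nat \<Rightarrow> 'a::comm_ring_1 \<Rightarrow> 'a \<Rightarrow> 'a" where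
  "Sf n k p q = (THE c. (\<forall>j>n. c j = 0) \<and>
       [:0, 1:] ^ n = (\<Sum>j\<le>n. smult (c j) (ffall p q j))) k"

end

theory Submission
  imports Defs
begin

text \<open>Multiplying by \<open>x\<close> shifts the falling-factorial basis:
  \<open>x \<cdot> P\<^sub>j = P\<^sub>j\<^sub>+\<^sub>1 + w\<^sub>j P\<^sub>j\<close> with \<open>P\<^sub>j = (x - w\<^sub>0)\<cdots>(x - w\<^sub>j\<^sub>-\<^sub>1)\<close>.
  Hence the coefficients of \<open>x\<^sup>n\<close> in this basis obey the Stirling-type recurrence
  \<open>S(n+1,k) = S(n,k-1) + w\<^sub>k S(n,k)\<close>, which in generating-function form reads
  \<open>G\<^sub>k(t) (1 - w\<^sub>k t) = t G\<^sub>k\<^sub>-\<^sub>1(t)\<close>; iterating gives the product formula.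
  For the Fibonacci weights \<open>w\<^sub>i = F\<^sub>i(p,q)\<close> we have \<open>w\<^sub>0 = 0\<close>, so \<open>P\<^sub>j\<close> is the
  generalized falling factorial and the \<open>i = 0\<close> factor of the product is 1.\<close>

definition falling_poly :: "(nat \<Rightarrow> 'a::comm_ring_1) \<Rightarrow> nat \<Rightarrow> 'a poly" where
  "falling_poly w j = (\<Prod>i<j. [:- w i, 1:])"

text \<open>For \<open>w k = k\<close> these are the Stirling numbers of the second kind.\<close>

fun Stirling_weighted :: "(nat \<Rightarrow> 'a::comm_ring_1) \<Rightarrow> nat \<Rightarrow> nat \<Rightarrow> 'a" where
  "Stirling_weighted w 0 k = (if k = 0 then 1 else 0)"
| "Stirling_weighted w (Suc n) k =
     (case k of 0 \<Rightarrow> 0 | Suc j \<Rightarrow> Stirling_weighted w n j) + w k * Stirling_weighted w n k"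

lemma falling_poly_Suc: "falling_poly w (Suc j) = falling_poly w j * [:- w j, 1:]"
  by (simp add: falling_poly_def)

lemma falling_poly_nonzero: "falling_poly w j \<noteq> (0 :: 'a::idom poly)"
  by (simp add: falling_poly_def)

lemma degree_falling_poly: "degree (falling_poly w j :: 'a::idom poly) = j"
  by (simp add: falling_poly_def degree_prod_eq_sum_degree)

lemma ffall_eq_falling_poly: "ffall p q j = falling_poly (\<lambda>i. Fpq i p q) j"
proof (cases j)
  case (Suc m)
  have "{..<Suc m} = insert 0 {1..<Suc m}" by auto
  then show ?thesis
    using Suc by (simp add: ffall_def falling_poly_def)
qed (simp add: ffall_def falling_poly_def)

lemma Stirling_weighted_eq_0: "n < k \<Longrightarrow> Stirling_weighted w n k = 0"
  by (induction n arbitrary: k) (auto split: nat.split)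

lemma power_x_eq_sum_falling_poly:
  "[:0, 1:] ^ n = (\<Sum>j\<le>n. smult (Stirling_weighted w n j) (falling_poly w j))"
proof (induction n)
  case 0
  show ?case by (simp add: falling_poly_def)
next
  case (Suc n)
  let ?S = "Stirling_weighted w n"
  have shift: "[:0, 1:] * falling_poly w j = falling_poly w (Suc j) + smult (w j) (falling_poly w j)" for j
    by (simp add: falling_poly_Suc algebra_simps)
  have "[:0, 1:] ^ Suc n = (\<Sum>j\<le>n. smult (?S j) ([:0, 1:] * falling_poly w j))"
    using Suc by (simp add: sum_distrib_left mult_smult_right)
  also have "\<dots> = (\<Sum>j\<le>n. smult (?S j) (falling_poly w (Suc j)))
                 + (\<Sum>j\<le>n. smult (w j * ?S j) (falling_poly w j))"
    unfolding shift by (simp add: smult_add_right sum.distrib mult.commute)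
  also have "(\<Sum>j\<le>n. smult (?S j) (falling_poly w (Suc j)))
           = (\<Sum>j\<le>Suc n. smult (case j of 0 \<Rightarrow> 0 | Suc i \<Rightarrow> ?S i) (falling_poly w j))"
    by (subst sum.atMost_Suc_shift) simp
  also have "(\<Sum>j\<le>n. smult (w j * ?S j) (falling_poly w j))
           = (\<Sum>j\<le>Suc n. smult (w j * ?S j) (falling_poly w j))"
    by (simp add: Stirling_weighted_eq_0)
  finally show ?case
    by (simp add: sum.distrib[symmetric] smult_add_left)
qed

lemma sum_smult_degree_basis_eq_0D:
  fixes b :: "nat \<Rightarrow> 'a::idom poly"
  assumes degree: "\<And>j. degree (b j) = j" and nonzero: "\<And>j. b j \<noteq> 0"
    and sum: "(\<Sum>j\<le>n. smult (e j) (b j)) = 0"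
  shows "\<forall>j\<le>n. e j = 0"
  using sum
proof (induction n)
  case 0
  then show ?case by (simp add: nonzero)
next
  case (Suc n)
  have "coeff (\<Sum>j\<le>n. smult (e j) (b j)) (Suc n) = 0"
    by (simp add: coeff_sum coeff_eq_0 degree)
  then have "e (Suc n) * lead_coeff (b (Suc n)) = coeff (\<Sum>j\<le>Suc n. smult (e j) (b j)) (Suc n)"
    by (simp add: degree)
  then have "e (Suc n) * lead_coeff (b (Suc n)) = 0"
    by (simp only: Suc.prems coeff_0)
  then have "e (Suc n) = 0"
    by (simp add: nonzero)
  with Suc show ?case
    by (auto simp: le_Suc_eq)
qed

lemma Sf_eq_Stirling_weighted:
  "Sf n k p q = Stirling_weighted (\<lambda>i. Fpq i p q) n k" for p q :: "'a::idom"
proof -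
  let ?w = "\<lambda>i. Fpq i p q" and ?S = "Stirling_weighted (\<lambda>i. Fpq i p q) n"
  have "(THE c. (\<forall>j>n. c j = 0) \<and> [:0, 1:] ^ n = (\<Sum>j\<le>n. smult (c j) (ffall p q j))) = ?S"
  proof (rule the_equality)
    show "(\<forall>j>n. ?S j = 0) \<and> [:0, 1:] ^ n = (\<Sum>j\<le>n. smult (?S j) (ffall p q j))"
      by (simp add: Stirling_weighted_eq_0 ffall_eq_falling_poly power_x_eq_sum_falling_poly)
  next
    fix c
    assume c: "(\<forall>j>n. c j = 0) \<and> [:0, 1:] ^ n = (\<Sum>j\<le>n. smult (c j) (ffall p q j))"
    have "(\<Sum>j\<le>n. smult (c j - ?S j) (falling_poly ?w j)) = 0"
      using c power_x_eq_sum_falling_poly[of n ?w]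
      by (simp add: ffall_eq_falling_poly smult_diff_left sum_subtractf)
    then have "\<forall>j\<le>n. c j - ?S j = 0"
      by (rule sum_smult_degree_basis_eq_0D[OF degree_falling_poly falling_poly_nonzero])
    with c show "c = ?S"
      by (intro ext) (metis Stirling_weighted_eq_0 not_le eq_iff_diff_eq_0)
  qed
  then show ?thesis
    by (simp add: Sf_def)
qed

lemma Stirling_weighted_fps_recurrence:
  "Abs_fps (\<lambda>n. Stirling_weighted w n (Suc k)) * (1 - fps_const (w (Suc k)) * fps_X)
     = fps_X * Abs_fps (\<lambda>n. Stirling_weighted w n k)"
proof (rule fps_ext)
  fix n
  show "fps_nth (Abs_fps (\<lambda>n. Stirling_weighted w n (Suc k)) * (1 - fps_const (w (Suc k)) * fps_X)) n
      = fps_nth (fps_X * Abs_fps (\<lambda>n. Stirling_weighted w n k)) n"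
    by (cases n) (simp_all add: algebra_simps fps_X_mult_nth)
qed

lemma Stirling_weighted_fps:
  "Abs_fps (\<lambda>n. Stirling_weighted w n k) * (\<Prod>i\<le>k. 1 - fps_const (w i) * fps_X) = fps_X ^ k"
proof (induction k)
  case 0
  have "Abs_fps (\<lambda>n. Stirling_weighted w n 0) * (1 - fps_const (w 0) * fps_X) = 1"
  proof (rule fps_ext)
    fix n
    show "fps_nth (Abs_fps (\<lambda>n. Stirling_weighted w n 0) * (1 - fps_const (w 0) * fps_X)) n
        = fps_nth 1 n"
      by (cases n) (simp_all add: algebra_simps fps_X_mult_nth)
  qed
  then show ?case by simp
next
  case (Suc k)
  let ?factor = "\<lambda>i. 1 - fps_const (w i) * fps_X"
  have "Abs_fps (\<lambda>n. Stirling_weighted w n (Suc k)) * (\<Prod>i\<le>Suc k. ?factor i)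
      = (Abs_fps (\<lambda>n. Stirling_weighted w n (Suc k)) * ?factor (Suc k)) * (\<Prod>i\<le>k. ?factor i)"
    by (simp only: prod.atMost_Suc mult_ac)
  also have "\<dots> = fps_X * (Abs_fps (\<lambda>n. Stirling_weighted w n k) * (\<Prod>i\<le>k. ?factor i))"
    by (simp only: Stirling_weighted_fps_recurrence mult.assoc)
  also have "\<dots> = fps_X ^ Suc k"
    by (simp only: Suc.IH power_Suc)
  finally show ?case .
qed

lemma one_minus_const_X_neq_0: "1 - fps_const c * fps_X \<noteq> (0 :: 'a::comm_ring_1 fps)"
proof
  assume "1 - fps_const c * fps_X = 0"
  then have "fps_nth (1 - fps_const c * fps_X) 0 = 0" by simp
  then show False by simp
qed

theorem theorem10:
  fixes p q :: "'a::field" and k :: nat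
  assumes "k \<ge> 1"
  shows "Abs_fps (\<lambda>n. if n \<ge> k then Sf n k p q else 0)
         = fps_X ^ k / (\<Prod>i\<in>{1..k}. (1 - fps_const (Fpq i p q) * fps_X))"
proof -
  let ?w = "\<lambda>i. Fpq i p q"
  let ?P = "\<Prod>i\<in>{1..k}. (1 - fps_const (?w i) * fps_X)"
  have series: "Abs_fps (\<lambda>n. if n \<ge> k then Sf n k p q else 0) = Abs_fps (\<lambda>n. Stirling_weighted ?w n k)"
    by (rule fps_ext) (simp add: Sf_eq_Stirling_weighted Stirling_weighted_eq_0)
  have "{..k} = insert 0 {1..k}" by auto
  then have "Abs_fps (\<lambda>n. Stirling_weighted ?w n k) * ?P = fps_X ^ k"
    using Stirling_weighted_fps[of ?w k] by simp
  moreover have "?P \<noteq> 0"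
    using one_minus_const_X_neq_0 by (simp only: prod_zero_iff finite_atLeastAtMost bex_simps) blast
  ultimately show ?thesis
    unfolding series by (metis nonzero_mult_div_cancel_right)
qed

end
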